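(* Let $n,x$ be positive integers with $x\le n$ and let $M_1,\dots,M_s$ be perfect matchings of $K_{2n}$. Let $M$ be a perfect matching of $K_{2n}$ chosen uniformly at random. For $i\in\{1,\dots,s\}$ and an $x$-matching $X\subseteq M_i$, let $A_{i,X}$ be the event $X\subseteq M$. Fix such a pair $(i,X)$, and let $\mathcal S$ be any set of pairs $(i',X')$ with $i'\in\{1,\dots,s\}$ and $X'\subseteq M_{i'}$ an $x$-matching whose vertex set is disjoint from the vertex set of $X$. Let $E=\bigcap_{(i',X')\in\mathcal S}\overline{A_{i',X'}}$ and suppose $\mathbb P(E)>0$. Then $$\mathbb P(A_{i,X}\mid E)\le\frac{1}{N},\qquad\text{where } N=\sum_{j=\max(0,\,2x-n)}^{x}\binom{2x}{2j}\frac{(2j)!}{j!\,2^j}.$$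
   Context: An $x$-matching of $K_{2n}$ is a matching (set of pairwise vertex-disjoint edges) of size exactly $x$. The empty intersection (when $\mathcal S=\emptyset$) is the whole probability space. *)

theory Defs
  imports "HOL-Probability.Probability"
begin

definition Kedges :: "nat \<Rightarrow> nat set set" where
  "Kedges n = {e. \<exists>u v. u \<noteq> v \<and> u < 2*n \<and> v < 2*n \<and> e = {u, v}}"

definition is_matching :: "nat \<Rightarrow> nat set set \<Rightarrow> bool" where
  "is_matching n X \<longleftrightarrow> X \<subseteq> Kedges n \<and> (\<forall>e\<in>X. \<forall>f\<in>X. e \<noteq> f \<longrightarrow> e \<inter> f = {})"

definition is_x_matching :: "nat \<Rightarrow> nat \<Rightarrow> nat set set \<Rightarrow> bool" where
  "is_x_matching n x X \<longleftrightarrow> is_matching n X \<and> card X = x"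

definition is_perfect_matching :: "nat \<Rightarrow> nat set set \<Rightarrow> bool" where
  "is_perfect_matching n M \<longleftrightarrow> is_matching n M \<and> \<Union>M = {0..<2*n}"

definition perfect_matchings :: "nat \<Rightarrow> nat set set set" where
  "perfect_matchings n = {M. is_perfect_matching n M}"

definition PM_space :: "nat \<Rightarrow> nat set set pmf" where
  "PM_space n = pmf_of_set (perfect_matchings n)"

definition cond_prob :: "'a pmf \<Rightarrow> 'a set \<Rightarrow> 'a set \<Rightarrow> real" where
  "cond_prob p A B = measure_pmf.prob p (A \<inter> B) / measure_pmf.prob p B"

end

theory Submission
  imports Defs
begin

(* Proof idea (a switching argument).  Let Y be the 2x vertices covered by X and Q the other
   2(n-x) vertices.  Map a perfect matching M' of K_2n to compress X M', obtained by keeping the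
   edges of M' outside Y, adding X, and, for the vertices of Y not matched inside Y, pairing their
   partners in Q according to a fixed pairing of those vertices.  Then compress X M' always
   contains X, and:
   (1) every event A_{i',X'} in S lives outside Y, so M' lies in E whenever compress X M' does;
   (2) for each M in A \<inter> E and each matching \<sigma> on a vertex set W \<subseteq> Y with |W| = 2j,
       2x - n \<le> j \<le> x, some M' with compress X M' = M has exactly \<sigma> as its edges inside Y.
   Hence every M in A \<inter> E has at least N preimages in E, the preimages of distinct M are
   disjoint, and so |A \<inter> E| * N \<le> |E|, i.e. P(A | E) \<le> 1/N.  The number N of such \<sigma> is
   counted via the classical formula (2j)!/(j! 2^j) for perfect matchings of 2j points. *)

definition pmat :: "'a set \<Rightarrow> 'a set set set" where
  "pmat W = {\<sigma>. (\<forall>e\<in>\<sigma>. card e = 2) \<and> disjoint \<sigma> \<and> \<Union>\<sigma> = W}"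

lemma pmat_edge:
  assumes "\<sigma> \<in> pmat W" "e \<in> \<sigma>"
  shows "card e = 2" "e \<subseteq> W"
  using assms unfolding pmat_def by auto

lemma pmat_disjoint:
  assumes "\<sigma> \<in> pmat W" "e \<in> \<sigma>" "f \<in> \<sigma>" "e \<noteq> f"
  shows "e \<inter> f = {}"
  using assms unfolding pmat_def pairwise_def disjnt_def by auto

lemma pmat_edge_unique:
  assumes "\<sigma> \<in> pmat W" "e \<in> \<sigma>" "f \<in> \<sigma>" "u \<in> e" "u \<in> f"
  shows "e = f"
  using pmat_disjoint[OF assms(1-3)] assms(4,5) by blast

lemma pmat_Union: "\<sigma> \<in> pmat W \<Longrightarrow> \<Union>\<sigma> = W"
  unfolding pmat_def by auto

lemma pmat_unique: "\<sigma> \<in> pmat W \<Longrightarrow> \<sigma> \<in> pmat W' \<Longrightarrow> W = W'"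
  using pmat_Union by blast

lemma pmat_no_edge_outside: "\<sigma> \<in> pmat W \<Longrightarrow> a \<notin> W \<Longrightarrow> a \<in> e \<Longrightarrow> e \<notin> \<sigma>"
  using pmat_edge(2) by blast

lemma pmat_finite: "finite W \<Longrightarrow> finite (pmat W)"
  by (rule finite_subset[of _ "Pow (Pow W)"]) (auto simp: pmat_def)

lemma pmat_finite_edges: "\<sigma> \<in> pmat W \<Longrightarrow> finite W \<Longrightarrow> finite \<sigma>"
  by (metis finite_UnionD pmat_Union)

lemma pmat_card:
  assumes "\<sigma> \<in> pmat W" "finite W"
  shows "card W = 2 * card \<sigma>"
proof -
  have "card W = card (\<Union>\<sigma>)"
    using pmat_Union[OF assms(1)] by simp
  also have "\<dots> = sum card \<sigma>"
    using assms unfolding pmat_def by (intro card_Union_disjoint) (auto intro: finite_subset)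
  also have "\<dots> = 2 * card \<sigma>"
    using pmat_edge(1)[OF assms(1)] by simp
  finally show ?thesis .
qed

lemma pmat_Un:
  assumes "\<sigma> \<in> pmat A" "\<tau> \<in> pmat B" "A \<inter> B = {}"
  shows "\<sigma> \<union> \<tau> \<in> pmat (A \<union> B)"
  using assms unfolding pmat_def by (auto intro: disjoint_union)

lemma pmat_Diff:
  assumes "\<sigma> \<in> pmat W" "\<tau> \<subseteq> \<sigma>"
  shows "\<sigma> - \<tau> \<in> pmat (W - \<Union>\<tau>)"
proof -
  have "e \<inter> \<Union>\<tau> = {}" if "e \<in> \<sigma> - \<tau>" for e
    using that assms pmat_disjoint[OF assms(1)] by blast
  then have "\<Union>(\<sigma> - \<tau>) = W - \<Union>\<tau>"
    using pmat_Union[OF assms(1)] assms(2) by blast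
  then show ?thesis
    using assms(1) unfolding pmat_def by (auto intro: pairwise_subset)
qed

lemma pmat_subset: "M \<in> pmat V \<Longrightarrow> X \<subseteq> M \<Longrightarrow> X \<in> pmat (\<Union>X)"
  unfolding pmat_def by (auto intro: pairwise_subset)

lemma pmat_doubleton: "a \<noteq> b \<Longrightarrow> {{a, b}} \<in> pmat {a, b}"
  unfolding pmat_def by auto

lemma pmat_decomp:
  assumes "a \<in> W"
  shows "pmat W = (\<Union>b\<in>W - {a}. insert {a, b} ` pmat (W - {a, b}))"
proof (intro equalityI subsetI)
  fix \<sigma> assume \<sigma>: "\<sigma> \<in> pmat W"
  then obtain e where e: "e \<in> \<sigma>" "a \<in> e"
    using assms pmat_Union by blast
  then obtain b where b: "e = {a, b}" "b \<noteq> a"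
    using pmat_edge(1)[OF \<sigma> e(1)] unfolding card_2_iff by auto
  have "b \<in> W"
    using pmat_edge(2)[OF \<sigma> e(1)] b by auto
  have "\<sigma> - {e} \<in> pmat (W - {a, b})"
    using pmat_Diff[OF \<sigma>, of "{e}"] e b by simp
  moreover have "\<sigma> = insert {a, b} (\<sigma> - {e})"
    using e b by auto
  ultimately show "\<sigma> \<in> (\<Union>b\<in>W - {a}. insert {a, b} ` pmat (W - {a, b}))"
    using \<open>b \<in> W\<close> b by blast
next
  fix \<sigma> assume "\<sigma> \<in> (\<Union>b\<in>W - {a}. insert {a, b} ` pmat (W - {a, b}))"
  then obtain b \<tau> where b: "b \<in> W" "b \<noteq> a" and \<tau>: "\<tau> \<in> pmat (W - {a, b})"
    and \<sigma>: "\<sigma> = {{a, b}} \<union> \<tau>"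
    by auto
  have "{a, b} \<union> (W - {a, b}) = W"
    using assms b by auto
  then show "\<sigma> \<in> pmat W"
    using pmat_Un[OF pmat_doubleton[of a b] \<tau>] b \<sigma> by auto
qed

lemma pmat_empty: "pmat {} = {{}}"
  unfolding pmat_def by (auto, metis card.empty zero_neq_numeral)

lemma card_pmat_decomp:
  assumes "finite W" "a \<in> W"
  shows "card (pmat W) = (\<Sum>b\<in>W - {a}. card (pmat (W - {a, b})))"
proof -
  have inj: "inj_on (insert {a, b}) (pmat (W - {a, b}))" for b
  proof (rule inj_onI)
    fix \<sigma> \<tau> assume "\<sigma> \<in> pmat (W - {a, b})" "\<tau> \<in> pmat (W - {a, b})"
      and "insert {a, b} \<sigma> = insert {a, b} \<tau>"
    then show "\<sigma> = \<tau>"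
      using pmat_no_edge_outside[of _ "W - {a, b}" a "{a, b}"] by (simp add: insert_ident)
  qed
  have "card (pmat W) = (\<Sum>b\<in>W - {a}. card (insert {a, b} ` pmat (W - {a, b})))"
    unfolding pmat_decomp[OF assms(2)]
  proof (rule card_UN_disjoint)
    show "finite (W - {a})" "\<forall>b\<in>W - {a}. finite (insert {a, b} ` pmat (W - {a, b}))"
      using assms(1) by (simp_all add: pmat_finite)
    show "\<forall>b\<in>W - {a}. \<forall>c\<in>W - {a}. b \<noteq> c \<longrightarrow>
        insert {a, b} ` pmat (W - {a, b}) \<inter> insert {a, c} ` pmat (W - {a, c}) = {}"
    proof (intro ballI impI equals0I)
      fix b c \<rho> assume "b \<noteq> c"
        and \<rho>: "\<rho> \<in> insert {a, b} ` pmat (W - {a, b}) \<inter> insert {a, c} ` pmat (W - {a, c})"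
      obtain \<tau> where \<tau>: "\<rho> = insert {a, b} \<tau>" "\<tau> \<in> pmat (W - {a, b})"
        using IntD1[OF \<rho>] by (rule imageE)
      obtain \<tau>' where "\<rho> = insert {a, c} \<tau>'"
        using IntD2[OF \<rho>] by (rule imageE)
      then have "{a, c} \<in> insert {a, b} \<tau>"
        using \<tau>(1) by simp
      moreover have "{a, c} \<noteq> {a, b}"
        using \<open>b \<noteq> c\<close> by (simp add: doubleton_eq_iff)
      ultimately have "{a, c} \<in> \<tau>"
        by simp
      then show False
        using pmat_no_edge_outside[OF \<tau>(2), of a] by simp
    qed
  qed
  also have "\<dots> = (\<Sum>b\<in>W - {a}. card (pmat (W - {a, b})))"
    using inj by (simp add: card_image)
  finally show ?thesis .
qed

lemma pmat_count:
  assumes "finite W" "card W = 2 * j"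
  shows "card (pmat W) * (fact j * 2 ^ j) = fact (2 * j)"
  using assms
proof (induction j arbitrary: W)
  case 0
  then show ?case by (simp add: pmat_empty)
next
  case (Suc j)
  then have "W \<noteq> {}"
    by (metis card.empty mult_is_0 nat.simps(3) zero_neq_numeral)
  then obtain a where a: "a \<in> W"
    by blast
  have rest: "finite (W - {a, b})" "card (W - {a, b}) = 2 * j" if "b \<in> W - {a}" for b
  proof -
    have "{a, b} \<subseteq> W" "card {a, b} = 2"
      using a that by auto
    then show "finite (W - {a, b})" "card (W - {a, b}) = 2 * j"
      using Suc.prems by (simp_all add: card_Diff_subset)
  qed
  have "card (pmat W) * (fact j * 2 ^ j) = (\<Sum>b\<in>W - {a}. fact (2 * j))"
    using card_pmat_decomp[OF Suc.prems(1) a] Suc.IH rest by (simp add: sum_distrib_right)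
  also have "\<dots> = (2 * j + 1) * fact (2 * j)"
    using Suc.prems a by simp
  finally have IH: "card (pmat W) * (fact j * 2 ^ j) = (2 * j + 1) * fact (2 * j)" .
  have "card (pmat W) * (fact (Suc j) * 2 ^ Suc j) = (card (pmat W) * (fact j * 2 ^ j)) * (2 * j + 2)"
    by (simp add: algebra_simps)
  also have "\<dots> = (2 * j + 2) * ((2 * j + 1) * fact (2 * j))"
    using IH by simp
  also have "\<dots> = fact (2 * Suc j)"
    by (simp add: algebra_simps)
  finally show ?case .
qed

lemma real_card_pmat:
  assumes "finite W" "card W = 2 * j"
  shows "real (card (pmat W)) = fact (2 * j) / (fact j * 2 ^ j)"
proof -
  have "real (card (pmat W)) * (fact j * 2 ^ j) = fact (2 * j)"
    using pmat_count[OF assms] by (metis of_nat_fact of_nat_mult of_nat_numeral of_nat_power)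
  then show ?thesis
    by (simp add: field_simps)
qed

text \<open>Matchings with between a and b edges whose vertices lie in Y (and which are perfect on
  the vertex set they cover); with a = 2x - n and b = x these are exactly the configurations
  counted by N.\<close>

definition pmat_within :: "'a set \<Rightarrow> nat \<Rightarrow> nat \<Rightarrow> 'a set set set" where
  "pmat_within Y a b = (\<Union>j\<in>{a..b}. \<Union>W\<in>{W. W \<subseteq> Y \<and> card W = 2 * j}. pmat W)"

lemma real_card_pmat_of_size:
  assumes "finite Y" "card Y = m"
  shows "real (card (\<Union>W\<in>{W. W \<subseteq> Y \<and> card W = 2 * j}. pmat W))
    = real (m choose (2 * j)) * fact (2 * j) / (fact j * 2 ^ j)"
proof -
  let ?Ws = "{W. W \<subseteq> Y \<and> card W = 2 * j}"
  have "finite ?Ws"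
    using assms(1) by simp
  then have "card (\<Union>W\<in>?Ws. pmat W) = (\<Sum>W\<in>?Ws. card (pmat W))"
  proof (rule card_UN_disjoint)
    show "\<forall>W\<in>?Ws. finite (pmat W)"
      using assms(1) by (auto intro: pmat_finite finite_subset)
    show "\<forall>W\<in>?Ws. \<forall>W'\<in>?Ws. W \<noteq> W' \<longrightarrow> pmat W \<inter> pmat W' = {}"
      by (blast dest: pmat_unique)
  qed
  then have "real (card (\<Union>W\<in>?Ws. pmat W)) = (\<Sum>W\<in>?Ws. real (card (pmat W)))"
    by simp
  also have "\<dots> = (\<Sum>W\<in>?Ws. fact (2 * j) / (fact j * 2 ^ j))"
    using assms(1) by (intro sum.cong) (auto intro: real_card_pmat finite_subset)
  also have "\<dots> = real (m choose (2 * j)) * (fact (2 * j) / (fact j * 2 ^ j))"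
    using n_subsets[OF assms(1)] assms(2) by simp
  finally show ?thesis
    by simp
qed

lemma real_card_pmat_within:
  assumes "finite Y" "card Y = m"
  shows "real (card (pmat_within Y a b))
    = (\<Sum>j = a..b. real (m choose (2 * j)) * fact (2 * j) / (fact j * 2 ^ j))"
proof -
  have "card (pmat_within Y a b) = (\<Sum>j = a..b. card (\<Union>W\<in>{W. W \<subseteq> Y \<and> card W = 2 * j}. pmat W))"
    unfolding pmat_within_def
  proof (rule card_UN_disjoint)
    show "\<forall>j\<in>{a..b}. finite (\<Union>W\<in>{W. W \<subseteq> Y \<and> card W = 2 * j}. pmat W)"
      using assms(1) by (auto intro: pmat_finite finite_subset)
    show "\<forall>i\<in>{a..b}. \<forall>j\<in>{a..b}. i \<noteq> j \<longrightarrow>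
      (\<Union>W\<in>{W. W \<subseteq> Y \<and> card W = 2 * i}. pmat W) \<inter> (\<Union>W\<in>{W. W \<subseteq> Y \<and> card W = 2 * j}. pmat W) = {}"
      by (fastforce dest: pmat_unique)
  qed simp
  then show ?thesis
    using real_card_pmat_of_size[OF assms] by simp
qed

lemma pmat_within_card_pos:
  assumes "finite Y" "\<sigma> \<in> pmat Y" "a \<le> card \<sigma>" "card \<sigma> \<le> b"
  shows "0 < card (pmat_within Y a b)"
proof -
  have "\<sigma> \<in> pmat_within Y a b"
    using assms pmat_card[OF assms(2,1)] unfolding pmat_within_def by auto
  moreover have "finite (pmat_within Y a b)"
    using assms(1) unfolding pmat_within_def by (auto intro: pmat_finite finite_subset)
  ultimately show ?thesis
    by (auto simp: card_gt_0_iff)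
qed

lemma blockwise_bij:
  assumes "disjoint C" "disjoint_family_on B C"
    and "\<And>c. c \<in> C \<Longrightarrow> finite c \<and> finite (B c) \<and> card (B c) = card c"
  shows "\<exists>f. bij_betw f (\<Union>C) (\<Union>c\<in>C. B c) \<and> (\<forall>c\<in>C. f ` c = B c)"
proof -
  have "\<forall>c\<in>C. \<exists>h. bij_betw h c (B c)"
    using assms(3) finite_same_card_bij by metis
  then obtain g where g: "\<And>c. c \<in> C \<Longrightarrow> bij_betw (g c) c (B c)"
    by metis
  define block where "block u = (SOME c. c \<in> C \<and> u \<in> c)" for u
  have block: "block u = c" if "c \<in> C" "u \<in> c" for c u
  proof -
    have "d = c" if "d \<in> C \<and> u \<in> d" for d
      using assms(1) \<open>c \<in> C\<close> \<open>u \<in> c\<close> that unfolding pairwise_def disjnt_def by blast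
    then show ?thesis
      unfolding block_def using that by (metis (mono_tags, lifting) someI)
  qed
  define f where "f u = g (block u) u" for u
  have f: "bij_betw f c (B c)" if "c \<in> C" for c
    using g[OF that] by (rule bij_betw_cong[THEN iffD1, rotated]) (simp add: f_def block[OF that])
  have "bij_betw f (\<Union>c\<in>C. c) (\<Union>c\<in>C. B c)"
    using assms(2) f by (rule bij_betw_UNION_disjoint)
  moreover have "\<forall>c\<in>C. f ` c = B c"
    using f by (simp add: bij_betw_def)
  ultimately show ?thesis
    by auto
qed

lemma pmat_graph:
  assumes "inj_on \<phi> U" "\<phi> ` U \<inter> U = {}"
  shows "(\<lambda>u. {u, \<phi> u}) ` U \<in> pmat (U \<union> \<phi> ` U)"
  unfolding pmat_def
proof (intro CollectI conjI ballI)
  fix e assume "e \<in> (\<lambda>u. {u, \<phi> u}) ` U"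
  then obtain u where "u \<in> U" "e = {u, \<phi> u}"
    by blast
  moreover have "\<phi> u \<noteq> u"
    using assms(2) \<open>u \<in> U\<close> by (auto simp: disjoint_iff)
  ultimately show "card e = 2"
    by simp
next
  show "disjoint ((\<lambda>u. {u, \<phi> u}) ` U)"
  proof (rule pairwise_imageI)
    fix u v assume "u \<in> U" "v \<in> U" "u \<noteq> v" "{u, \<phi> u} \<noteq> {v, \<phi> v}"
    then have "\<phi> u \<noteq> \<phi> v" "u \<noteq> \<phi> v" "v \<noteq> \<phi> u"
      using assms by (auto simp: inj_on_eq_iff disjoint_iff)
    then show "disjnt {u, \<phi> u} {v, \<phi> v}"
      using \<open>u \<noteq> v\<close> by auto
  qed
next
  show "\<Union>((\<lambda>u. {u, \<phi> u}) ` U) = U \<union> \<phi> ` U"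
    by auto
qed

definition inner :: "'a set set \<Rightarrow> 'a set \<Rightarrow> 'a set set" where
  "inner M Y = {e \<in> M. e \<subseteq> Y}"

definition outer :: "'a set set \<Rightarrow> 'a set \<Rightarrow> 'a set set" where
  "outer M Y = {e \<in> M. e \<inter> Y = {}}"

definition partners :: "'a set set \<Rightarrow> 'a set \<Rightarrow> 'a set" where
  "partners M c = \<Union>{e \<in> M. e \<inter> c \<noteq> {}} - c"

lemma partners_eq:
  assumes "M \<in> pmat V" "\<And>u. u \<in> c \<Longrightarrow> {u, p u} \<in> M \<and> p u \<notin> c"
  shows "partners M c = p ` c"
proof (intro equalityI subsetI)
  fix v assume "v \<in> partners M c"
  then obtain e u where e: "e \<in> M" "v \<in> e" "v \<notin> c" "u \<in> e" "u \<in> c"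
    unfolding partners_def by blast
  then have "e = {u, p u}"
    using pmat_edge_unique[OF assms(1) e(1), of "{u, p u}" u] assms(2) by blast
  then show "v \<in> p ` c"
    using e by auto
next
  fix v assume "v \<in> p ` c"
  then obtain u where "u \<in> c" "v = p u"
    by blast
  then show "v \<in> partners M c"
    using assms(2) unfolding partners_def by blast
qed

lemma pairs_to_edges:
  assumes C: "C \<in> pmat U" and F: "F \<in> pmat Q" and "finite U" "finite Q" "card C \<le> card F"
  shows "\<exists>\<phi>. inj_on \<phi> U \<and> (\<lambda>c. \<phi> ` c) ` C \<subseteq> F"
proof -
  have "finite C" "finite F"
    using pmat_finite_edges[OF C] pmat_finite_edges[OF F] assms(3,4) by auto
  then obtain \<psi> where \<psi>: "\<psi> ` C \<subseteq> F" "inj_on \<psi> C"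
    using card_le_inj[OF _ _ \<open>card C \<le> card F\<close>] by blast
  have edge_C: "card c = 2" if "c \<in> C" for c
    using pmat_edge[OF C that] by auto
  have edge_\<psi>: "card (\<psi> c) = 2" if "c \<in> C" for c
    using pmat_edge[OF F subsetD[OF \<psi>(1) imageI[OF that]]] by auto
  have "disjoint_family_on \<psi> C"
    unfolding disjoint_family_on_def
    using pmat_disjoint[OF F] \<psi> by (metis image_subset_iff inj_on_def)
  moreover have "disjoint C"
    using C unfolding pmat_def by simp
  ultimately obtain \<phi> where \<phi>: "bij_betw \<phi> (\<Union>C) (\<Union>c\<in>C. \<psi> c)" "\<forall>c\<in>C. \<phi> ` c = \<psi> c"
    using blockwise_bij[of C \<psi>] edge_C edge_\<psi> by (metis card.infinite zero_neq_numeral)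
  then have "inj_on \<phi> U" "(\<lambda>c. \<phi> ` c) ` C \<subseteq> F"
    using pmat_Union[OF C] \<psi>(1) unfolding bij_betw_def by auto
  then show ?thesis
    by blast
qed

lemma inner_outer_split:
  assumes M: "\<sigma> \<union> (R \<union> K) \<in> pmat V" and YQ: "Y \<inter> Q = {}"
    and "\<And>e. e \<in> \<sigma> \<Longrightarrow> e \<subseteq> Y" "\<And>e. e \<in> R \<Longrightarrow> e \<subseteq> Q"
    and "\<And>e. e \<in> K \<Longrightarrow> e \<inter> Y \<noteq> {} \<and> e \<inter> Q \<noteq> {}"
  shows "inner (\<sigma> \<union> (R \<union> K)) Y = \<sigma> \<and> outer (\<sigma> \<union> (R \<union> K)) Y = R"
proof -
  have nonempty: "e \<noteq> {}" if "e \<in> \<sigma> \<union> (R \<union> K)" for e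
    using pmat_edge(1)[OF M that] by auto
  have "e \<subseteq> Y \<and> e \<inter> Y \<noteq> {}" if "e \<in> \<sigma>" for e
    using assms(3)[OF that] nonempty[of e] that by auto
  moreover have "\<not> e \<subseteq> Y \<and> e \<inter> Y = {}" if "e \<in> R" for e
    using assms(4)[OF that] nonempty[of e] that YQ by auto
  moreover have "\<not> e \<subseteq> Y \<and> e \<inter> Y \<noteq> {}" if "e \<in> K" for e
    using assms(5)[OF that] YQ by auto
  ultimately show ?thesis
    unfolding inner_def outer_def by blast
qed

lemma exchange_pmat:
  assumes \<sigma>: "\<sigma> \<in> pmat W" and F: "F \<in> pmat Q" and BF: "B \<subseteq> F"
    and \<phi>: "inj_on \<phi> U" "\<phi> ` U = \<Union>B"
    and "W \<inter> U = {}" "W \<inter> Q = {}" "U \<inter> Q = {}"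
  shows "\<sigma> \<union> ((F - B) \<union> (\<lambda>u. {u, \<phi> u}) ` U) \<in> pmat (W \<union> U \<union> Q)"
proof -
  have BQ: "\<Union>B \<subseteq> Q"
    using BF pmat_edge(2)[OF F] by blast
  have "(\<lambda>u. {u, \<phi> u}) ` U \<in> pmat (U \<union> \<Union>B)"
    using pmat_graph[OF \<phi>(1)] \<phi>(2) BQ \<open>U \<inter> Q = {}\<close> by auto
  moreover have "F - B \<in> pmat (Q - \<Union>B)"
    using pmat_Diff[OF F BF] .
  ultimately have "\<sigma> \<union> ((F - B) \<union> (\<lambda>u. {u, \<phi> u}) ` U) \<in> pmat (W \<union> ((Q - \<Union>B) \<union> (U \<union> \<Union>B)))"
    using assms(6-8) BQ by (intro pmat_Un[OF \<sigma>] pmat_Un) auto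
  moreover have "W \<union> ((Q - \<Union>B) \<union> (U \<union> \<Union>B)) = W \<union> U \<union> Q"
    using BQ by blast
  ultimately show ?thesis
    by simp
qed

text \<open>Given a perfect matching F of Q, a perfect matching \<sigma> of
  W \<subseteq> Y and a pairing C of the leftover vertices U = Y - W with at most card F pairs, build a
  perfect matching M' of Y \<union> Q with exactly \<sigma> inside Y such that the edges of M' avoiding Y,
  together with the partner pairs of the blocks of C, give back F: each block c of C is joined
  vertex by vertex to a distinct edge \<phi> ` c of F.\<close>

lemma exchange_matching:
  assumes YQ: "Y \<inter> Q = {}" and "finite Y" "finite Q"
    and F: "F \<in> pmat Q" and \<sigma>: "\<sigma> \<in> pmat W" and WY: "W \<subseteq> Y"
    and C: "C \<in> pmat (Y - W)" and "card C \<le> card F"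
  shows "\<exists>M' \<in> pmat (Y \<union> Q). inner M' Y = \<sigma> \<and> outer M' Y \<union> partners M' ` C = F"
proof -
  define U where "U = Y - W"
  obtain \<phi> where \<phi>: "inj_on \<phi> U" "(\<lambda>c. \<phi> ` c) ` C \<subseteq> F"
    using pairs_to_edges[OF C F _ \<open>finite Q\<close> \<open>card C \<le> card F\<close>] \<open>finite Y\<close> unfolding U_def by auto
  define B where "B = (\<lambda>c. \<phi> ` c) ` C"
  have \<phi>U: "\<phi> ` U = \<Union>B"
    using pmat_Union[OF C] unfolding U_def B_def by auto
  have BQ: "\<Union>B \<subseteq> Q"
    using \<phi>(2) pmat_edge(2)[OF F] unfolding B_def by blast
  have UY: "U \<subseteq> Y"
    unfolding U_def by blast
  have cU: "c \<subseteq> U" if "c \<in> C" for c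
    using pmat_edge(2)[OF C that] unfolding U_def .
  define cross where "cross = (\<lambda>u. {u, \<phi> u}) ` U"
  define M' where "M' = \<sigma> \<union> ((F - B) \<union> cross)"
  have "M' \<in> pmat (W \<union> U \<union> Q)"
    unfolding M'_def cross_def
    using exchange_pmat[OF \<sigma> F _ \<phi>(1) \<phi>U] \<phi>(2) YQ WY UY unfolding B_def U_def by blast
  moreover have "W \<union> U \<union> Q = Y \<union> Q"
    using WY unfolding U_def by blast
  ultimately have M': "M' \<in> pmat (Y \<union> Q)"
    by simp
  have cross_edge: "{u, \<phi> u} \<in> cross" "\<phi> u \<in> Q" if "u \<in> U" for u
    using that \<phi>U BQ unfolding cross_def by auto
  have "inner M' Y = \<sigma> \<and> outer M' Y = F - B"
    unfolding M'_def
  proof (rule inner_outer_split[OF M'[unfolded M'_def] YQ])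
    show "e \<subseteq> Y" if "e \<in> \<sigma>" for e
      using pmat_edge(2)[OF \<sigma> that] WY by blast
    show "e \<subseteq> Q" if "e \<in> F - B" for e
      using pmat_edge(2)[OF F] that by blast
    show "e \<inter> Y \<noteq> {} \<and> e \<inter> Q \<noteq> {}" if "e \<in> cross" for e
    proof -
      obtain u where "u \<in> U" "e = {u, \<phi> u}"
        using \<open>e \<in> cross\<close> unfolding cross_def by blast
      then show ?thesis
        using cross_edge(2)[OF \<open>u \<in> U\<close>] UY by auto
    qed
  qed
  moreover have "partners M' c = \<phi> ` c" if "c \<in> C" for c
  proof (rule partners_eq[OF M'])
    fix u assume "u \<in> c"
    then have "{u, \<phi> u} \<in> cross" "\<phi> u \<in> Q"
      using cross_edge cU[OF that] by auto
    then show "{u, \<phi> u} \<in> M' \<and> \<phi> u \<notin> c"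
      using YQ UY cU[OF that] unfolding M'_def by auto
  qed
  ultimately have "outer M' Y \<union> partners M' ` C = F"
    using \<phi>(2) unfolding B_def by auto
  then show ?thesis
    using M' \<open>inner M' Y = \<sigma> \<and> outer M' Y = F - B\<close> by blast
qed

definition canon :: "'a set \<Rightarrow> 'a set set" where
  "canon U = (SOME C. C \<in> pmat U)"

lemma canon_in:
  assumes "finite U" "card U = 2 * k"
  shows "canon U \<in> pmat U"
proof -
  have "card (pmat U) \<noteq> 0"
    using pmat_count[OF assms] by (metis fact_nonzero mult_is_0)
  then have "pmat U \<noteq> {}"
    by auto
  then show ?thesis
    unfolding canon_def by (simp add: some_in_eq)
qed

definition compress :: "'a set set \<Rightarrow> 'a set set \<Rightarrow> 'a set set" where
  "compress X M = X \<union> outer M (\<Union>X) \<union> partners M ` canon (\<Union>X - \<Union>(inner M (\<Union>X)))"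

lemma compress_preimage:
  assumes M: "M \<in> pmat V" and XM: "X \<subseteq> M" and "finite V"
    and \<sigma>: "\<sigma> \<in> pmat W" and WX: "W \<subseteq> \<Union>X" and room: "card (\<Union>X - W) \<le> card (V - \<Union>X)"
  shows "\<exists>M' \<in> pmat V. inner M' (\<Union>X) = \<sigma> \<and> compress X M' = M"
proof -
  define Y where "Y = \<Union>X"
  define C where "C = canon (Y - W)"
  have YV: "Y \<subseteq> V"
    using XM pmat_Union[OF M] unfolding Y_def by blast
  then have fin: "finite Y" "finite (V - Y)" "finite W"
    using \<open>finite V\<close> finite_subset[OF WX[folded Y_def]] finite_subset[OF YV] by auto
  have F: "M - X \<in> pmat (V - Y)"
    using pmat_Diff[OF M XM] unfolding Y_def .
  have "card (Y - W) = 2 * (card X - card \<sigma>)"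
    using pmat_card[OF pmat_subset[OF M XM]] pmat_card[OF \<sigma>] fin WX
    by (simp add: card_Diff_subset Y_def)
  then have C: "C \<in> pmat (Y - W)"
    unfolding C_def using fin by (intro canon_in) auto
  have "2 * card C \<le> 2 * card (M - X)"
    using room pmat_card[OF C] pmat_card[OF F] fin unfolding Y_def by simp
  then obtain M' where M': "M' \<in> pmat (Y \<union> (V - Y))" "inner M' Y = \<sigma>"
    and F_eq: "outer M' Y \<union> partners M' ` C = M - X"
    using exchange_matching[OF _ fin(1,2) F \<sigma> _ C] WX unfolding Y_def by auto
  have "compress X M' = X \<union> (outer M' Y \<union> partners M' ` C)"
    unfolding compress_def Y_def[symmetric] M'(2) pmat_Union[OF \<sigma>] C_def[symmetric]
    by (simp add: Un_assoc)
  also have "\<dots> = M"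
    using F_eq XM by auto
  finally have "compress X M' = M" .
  moreover have "Y \<union> (V - Y) = V"
    using YV by auto
  ultimately show ?thesis
    using M' unfolding Y_def by auto
qed

lemma fibre_large:
  assumes M: "M \<in> pmat V" and XM: "X \<subseteq> M" and "finite V" "card V = 2 * n" "card X = x"
  shows "card (pmat_within (\<Union>X) (2 * x - n) x) \<le> card {M' \<in> pmat V. compress X M' = M}"
proof -
  define Y where "Y = \<Union>X"
  define fibre where "fibre = {M' \<in> pmat V. compress X M' = M}"
  have YV: "Y \<subseteq> V"
    using XM pmat_Union[OF M] unfolding Y_def by blast
  then have "finite Y"
    using \<open>finite V\<close> finite_subset by blast
  then have cardY: "card Y = 2 * x"
    using pmat_card[OF pmat_subset[OF M XM]] \<open>card X = x\<close> unfolding Y_def by simp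
  have "pmat_within Y (2 * x - n) x \<subseteq> (\<lambda>M'. inner M' Y) ` fibre"
  proof
    fix \<sigma> assume "\<sigma> \<in> pmat_within Y (2 * x - n) x"
    then obtain j W where j: "2 * x - n \<le> j" "j \<le> x" and W: "W \<subseteq> Y" "card W = 2 * j"
      and \<sigma>: "\<sigma> \<in> pmat W"
      unfolding pmat_within_def by auto
    have "card (Y - W) = 2 * x - 2 * j"
      using W cardY \<open>finite Y\<close> by (simp add: card_Diff_subset finite_subset)
    moreover have "card (V - Y) = 2 * n - 2 * x"
      using YV cardY \<open>finite Y\<close> \<open>card V = 2 * n\<close> by (simp add: card_Diff_subset)
    ultimately have "card (Y - W) \<le> card (V - Y)"
      using j by linarith
    then obtain M' where "M' \<in> pmat V" "inner M' Y = \<sigma>" "compress X M' = M"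
      using compress_preimage[OF M XM \<open>finite V\<close> \<sigma>] W unfolding Y_def by blast
    then show "\<sigma> \<in> (\<lambda>M'. inner M' Y) ` fibre"
      unfolding fibre_def by force
  qed
  moreover have "finite fibre"
    unfolding fibre_def using pmat_finite[OF \<open>finite V\<close>] by simp
  ultimately have "card (pmat_within Y (2 * x - n) x) \<le> card fibre"
    by (meson card_image_le card_mono finite_imageI le_trans)
  then show ?thesis
    unfolding Y_def fibre_def .
qed

text \<open>Edge sets vertex-disjoint from X survive compression, so compression preserves the
  avoidance events.\<close>

lemma compress_keeps_disjoint:
  assumes "\<Union>X' \<inter> \<Union>X = {}" "X' \<subseteq> M"
  shows "X' \<subseteq> compress X M"
proof
  fix e assume "e \<in> X'"
  then have "e \<inter> \<Union>X = {}"
    using assms(1) by auto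
  then show "e \<in> compress X M"
    using \<open>e \<in> X'\<close> assms(2) unfolding compress_def outer_def by auto
qed

lemma card_mult_le_by_fibres:
  assumes "finite U" "\<And>t. t \<in> T \<Longrightarrow> k \<le> card {u \<in> U. h u = t}"
  shows "card T * k \<le> card U"
proof (cases "k = 0")
  case False
  have "T \<subseteq> h ` U"
  proof
    fix t assume "t \<in> T"
    then have "{u \<in> U. h u = t} \<noteq> {}"
      using assms(2) False by (metis card.empty le_zero_eq)
    then show "t \<in> h ` U"
      by blast
  qed
  then have "finite T"
    using assms(1) finite_surj by blast
  have "card T * k = (\<Sum>t\<in>T. k)"
    by simp
  also have "\<dots> \<le> (\<Sum>t\<in>T. card {u \<in> U. h u = t})"
    using assms(2) by (rule sum_mono)
  also have "\<dots> = card (\<Union>t\<in>T. {u \<in> U. h u = t})"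
    using \<open>finite T\<close> assms(1) by (intro card_UN_disjoint[symmetric]) auto
  also have "\<dots> \<le> card U"
    using assms(1) by (intro card_mono) auto
  finally show ?thesis .
qed simp

lemma switching_bound:
  assumes "finite P" "P \<noteq> {}" "0 < measure_pmf.prob (pmf_of_set P) E" "0 < k"
    and "\<And>M. M \<in> P \<inter> A \<inter> E \<Longrightarrow> k \<le> card {M' \<in> P \<inter> E. h M' = M}"
  shows "cond_prob (pmf_of_set P) A E \<le> 1 / real k"
proof -
  have "card (P \<inter> A \<inter> E) * k \<le> card (P \<inter> E)"
    using assms(1,5) by (intro card_mult_le_by_fibres[where h = h]) auto
  moreover have "card (P \<inter> E) > 0"
    using assms(3) measure_pmf_of_set[OF assms(2,1), of E] assms(1) by (auto simp: card_gt_0_iff)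
  ultimately have "real (card (P \<inter> A \<inter> E)) / real (card (P \<inter> E)) \<le> 1 / real k"
    using \<open>0 < k\<close> by (simp add: field_simps flip: of_nat_mult)
  moreover have "cond_prob (pmf_of_set P) A E = real (card (P \<inter> A \<inter> E)) / real (card (P \<inter> E))"
    using measure_pmf_of_set[OF assms(2,1)] card_gt_0_iff[of P] assms(1,2)
    unfolding cond_prob_def by (simp add: Int_assoc)
  ultimately show ?thesis
    by simp
qed

lemma Kedges_iff: "e \<in> Kedges n \<longleftrightarrow> card e = 2 \<and> e \<subseteq> {0..<2 * n}"
  unfolding Kedges_def card_2_iff by (auto, blast)

lemma perfect_matchings_eq: "perfect_matchings n = pmat {0..<2 * n}"
proof (intro equalityI subsetI)
  fix M assume "M \<in> perfect_matchings n"
  then have "\<forall>e\<in>M. card e = 2" "\<forall>e\<in>M. \<forall>f\<in>M. e \<noteq> f \<longrightarrow> e \<inter> f = {}" "\<Union>M = {0..<2 * n}"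
    unfolding perfect_matchings_def is_perfect_matching_def is_matching_def
    by (auto simp: Kedges_iff subset_iff)
  then show "M \<in> pmat {0..<2 * n}"
    unfolding pmat_def pairwise_def disjnt_def by simp
next
  fix M assume M: "M \<in> pmat {0..<2 * n}"
  then have "M \<subseteq> Kedges n"
    using pmat_edge[OF M] by (auto simp: Kedges_iff)
  then show "M \<in> perfect_matchings n"
    using pmat_disjoint[OF M] pmat_Union[OF M]
    unfolding perfect_matchings_def is_perfect_matching_def is_matching_def by auto
qed

theorem mainTheorem5:
  fixes n x s i :: nat and Ms :: "nat \<Rightarrow> nat set set" and X :: "nat set set"
    and S :: "(nat \<times> nat set set) set"
  assumes "0 < x" and "x \<le> n"
    and "\<forall>k\<in>{1..s}. is_perfect_matching n (Ms k)"
    and "i \<in> {1..s}" and "X \<subseteq> Ms i" and "is_x_matching n x X"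
    and "\<forall>(i', X')\<in>S. i' \<in> {1..s} \<and> X' \<subseteq> Ms i' \<and> is_x_matching n x X'
                        \<and> \<Union>X' \<inter> \<Union>X = {}"
  defines "E \<equiv> {M. \<forall>(i', X')\<in>S. \<not> X' \<subseteq> M}"
    and "A \<equiv> {M. X \<subseteq> M}"
  assumes "measure_pmf.prob (PM_space n) E > 0"
  shows "cond_prob (PM_space n) A E \<le>
    1 / (\<Sum>j = 2*x - n..x. real ((2*x) choose (2*j)) * fact (2*j) / (fact j * 2 ^ j))"
proof -
  define V where "V = {0..<2 * n}"
  define I where "I = pmat_within (\<Union>X) (2 * x - n) x"
  have Mi: "Ms i \<in> pmat V" and PM: "PM_space n = pmf_of_set (pmat V)"
    using assms(3,4) unfolding PM_space_def V_def perfect_matchings_eq[symmetric]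
    by (auto simp: perfect_matchings_def)
  have X: "X \<in> pmat (\<Union>X)" "card X = x" "finite (\<Union>X)"
    using pmat_subset[OF Mi assms(5)] assms(6) pmat_Union[OF Mi] assms(5)
    unfolding is_x_matching_def V_def by (auto intro: finite_subset)
  have N: "real (card I)
      = (\<Sum>j = 2*x - n..x. real ((2*x) choose (2*j)) * fact (2*j) / (fact j * 2 ^ j))"
    unfolding I_def using pmat_card[OF X(1,3)] X(2) by (intro real_card_pmat_within[OF X(3)]) simp
  have "card I \<le> card {M' \<in> pmat V \<inter> E. compress X M' = M}" if M: "M \<in> pmat V \<inter> A \<inter> E" for M
  proof -
    have "\<not> X' \<subseteq> M'" if "compress X M' = M" "(i', X') \<in> S" for M' i' X'
      using compress_keeps_disjoint[of X' X M'] bspec[OF assms(7) that(2)] M that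
      unfolding E_def by auto
    then have "{M' \<in> pmat V \<inter> E. compress X M' = M} = {M' \<in> pmat V. compress X M' = M}"
      unfolding E_def by auto
    then show ?thesis
      using fibre_large[of M V X n x] M X(2) unfolding I_def V_def A_def by simp
  qed
  moreover have "0 < card I"
    using pmat_within_card_pos[OF X(3,1)] X(2) \<open>x \<le> n\<close> unfolding I_def by simp
  ultimately have "cond_prob (PM_space n) A E \<le> 1 / real (card I)"
    unfolding PM using assms(10) Mi
    by (intro switching_bound[where h = "compress X"]) (auto simp: pmat_finite V_def PM)
  then show ?thesis
    unfolding N .
qed

end
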